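(* Let $\varphi$ be a quasi-concave function on $\Omega$ (where $\Omega=(0,1)$ or $\Omega=(0,\infty)$) such that $\lim_{t\to0^+}t/\varphi(t)=0$. Then the Marcinkiewicz space $M_\varphi$ on $\Omega$ contains a lattice isometric copy of $\ell_\infty$.
   Context: A function $\varphi$ on $\Omega$ is quasi-concave if $\varphi(0)=0$, $\varphi$ is positive and non-decreasing on $\Omega$, and $t\mapsto\varphi(t)/t$ is non-increasing. The Marcinkiewicz space $M_\varphi$ is the space of measurable $f$ on $\Omega$ with $\|f\|_{M_\varphi}=\sup_{t\in\Omega}\frac{\varphi(t)}{t}\int_0^tf^*(s)\,ds<\infty$, where $f^*$ is the non-increasing rearrangement of $|f|$ with respect to Lebesgue measure. "Contains a lattice isometric copy of $\ell_\infty$" means there is a linear isometric embedding $T:\ell_\infty\to M_\varphi$ which is a lattice homomorphism. *)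

theory Defs
  imports "HOL-Analysis.Analysis"
begin

definition quasi_concave_on :: "real set \<Rightarrow> (real \<Rightarrow> real) \<Rightarrow> bool" where
  "quasi_concave_on \<Omega> \<phi> \<longleftrightarrow>
     \<phi> 0 = 0 \<and> (\<forall>t\<in>\<Omega>. \<phi> t > 0) \<and> mono_on \<Omega> \<phi> \<and>
     (\<forall>s\<in>\<Omega>. \<forall>t\<in>\<Omega>. s \<le> t \<longrightarrow> \<phi> t / t \<le> \<phi> s / s)"

definition rearr :: "real set \<Rightarrow> (real \<Rightarrow> real) \<Rightarrow> real \<Rightarrow> ennreal" where
  "rearr \<Omega> f t = Inf {s::ennreal. emeasure lebesgue {x\<in>\<Omega>. s < ennreal \<bar>f x\<bar>} \<le> ennreal t}"

definition marc_norm :: "real set \<Rightarrow> (real \<Rightarrow> real) \<Rightarrow> (real \<Rightarrow> real) \<Rightarrow> ennreal" where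
  "marc_norm \<Omega> \<phi> f = (SUP t\<in>\<Omega>. ennreal (\<phi> t / t) * set_nn_integral lborel {0<..t} (rearr \<Omega> f))"

definition marc_space :: "real set \<Rightarrow> (real \<Rightarrow> real) \<Rightarrow> (real \<Rightarrow> real) set" where
  "marc_space \<Omega> \<phi> = {f. set_borel_measurable lebesgue \<Omega> f \<and> marc_norm \<Omega> \<phi> f < top}"

definition linf :: "(nat \<Rightarrow> real) set" where
  "linf = {x. bounded (range x)}"

definition linf_norm :: "(nat \<Rightarrow> real) \<Rightarrow> real" where
  "linf_norm x = (SUP n. \<bar>x n\<bar>)"

text \<open>Elements of
  M_phi are identified when equal a.e. on \<Omega>, so the algebraic identities are a.e. on \<Omega>.\<close>
definition lattice_isometric_embedding ::
  "real set \<Rightarrow> (real \<Rightarrow> real) \<Rightarrow> ((nat \<Rightarrow> real) \<Rightarrow> (real \<Rightarrow> real)) \<Rightarrow> bool" where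
  "lattice_isometric_embedding \<Omega> \<phi> T \<longleftrightarrow>
     (\<forall>x\<in>linf. T x \<in> marc_space \<Omega> \<phi>) \<and>
     (\<forall>x\<in>linf. \<forall>y\<in>linf. \<forall>a b::real.
        AE s in lebesgue. s \<in> \<Omega> \<longrightarrow> T (\<lambda>n. a * x n + b * y n) s = a * T x s + b * T y s) \<and>
     (\<forall>x\<in>linf. \<forall>y\<in>linf.
        AE s in lebesgue. s \<in> \<Omega> \<longrightarrow> T (\<lambda>n. max (x n) (y n)) s = max (T x s) (T y s)) \<and>
     (\<forall>x\<in>linf. marc_norm \<Omega> \<phi> (T x) = ennreal (linf_norm x))"

end

theory Submission
  imports Defs
begin

text \<open>
  Let \<open>s\<close> decrease to \<open>0\<close>, let \<open>c\<close> be non-negative and non-decreasing, and let \<open>k\<close> be the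
  non-increasing step function equal to \<open>c j\<close> on the block \<open>(s (Suc j), s j]\<close>. Map a bounded
  sequence \<open>y\<close> to the step function equal to \<open>y n * c j\<close> on block \<open>j\<close>, where coordinate \<open>n\<close> is
  assigned to the infinitely many blocks \<open>j\<close> with \<open>fst (prod_decode j) = n\<close>. This map is linear
  and preserves \<open>max\<close>. The image of \<open>y\<close> is dominated by \<open>sup |y| * k\<close>, so its norm is at most
  \<open>sup |y|\<close> as soon as the integral of \<open>k\<close> over \<open>(0, t]\<close> is at most \<open>t / \<phi> t\<close>; evaluating the norm
  at \<open>t = s j - s (Suc j)\<close> bounds it below by \<open>|y n| * c j * \<phi> (s j - s (Suc j))\<close>, so the map is an
  isometry if moreover \<open>c j * \<phi> (s j - s (Suc j))\<close> has lim inf at least \<open>1\<close>.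

  Such \<open>s\<close> and \<open>c\<close> exist. If \<open>\<phi>\<close> has a positive infimum \<open>a\<close>, halve \<open>s\<close> in every step and take
  \<open>c j = 2 / \<phi> (2 * s j) - 1 / a\<close>. Otherwise \<open>\<phi>\<close> tends to \<open>0\<close> at \<open>0\<close>, and since \<open>t / \<phi> t\<close> does
  too, the points \<open>s j\<close> can be chosen so sparse that the integral of \<open>k\<close> below each block is
  negligible, with \<open>c j = (1 - \<eta> j) / \<phi> (s j - s (Suc j))\<close> for a sequence \<open>\<eta>\<close> tending to \<open>0\<close>.
\<close>

section \<open>Step functions on a decreasing sequence of blocks\<close>

definition decreasing_to_zero :: "(nat \<Rightarrow> real) \<Rightarrow> bool" where
  "decreasing_to_zero s \<longleftrightarrow> (\<forall>i. 0 < s i \<and> s (Suc i) < s i) \<and> s \<longlonglongrightarrow> 0"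

definition block_index :: "(nat \<Rightarrow> real) \<Rightarrow> real \<Rightarrow> nat" where
  "block_index s x = (LEAST j. s (Suc j) < x)"

definition block_step :: "(nat \<Rightarrow> real) \<Rightarrow> (nat \<Rightarrow> real) \<Rightarrow> real \<Rightarrow> real" where
  "block_step s c x = (if 0 < x \<and> x \<le> s 0 then c (block_index s x) else 0)"

lemma decreasing_to_zero_antimono:
  assumes "decreasing_to_zero s" "i \<le> j"
  shows "s j \<le> s i"
proof -
  have "decseq s"
    using assms(1) unfolding decreasing_to_zero_def by (intro decseq_SucI) (auto intro: less_imp_le)
  then show ?thesis using assms(2) by (auto simp: decseq_def)
qed

lemma decreasing_to_zero_exists_less:
  assumes "decreasing_to_zero s" "0 < x"
  shows "\<exists>j. s j < x"
  using order_tendstoD(2)[of s 0 sequentially x] assms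
  by (auto simp: decreasing_to_zero_def eventually_sequentially)

lemma block_index_eqI:
  assumes "decreasing_to_zero s" "s (Suc j) < x" "x \<le> s j"
  shows "block_index s x = j"
  unfolding block_index_def
proof (rule Least_equality)
  fix i assume "s (Suc i) < x"
  then show "j \<le> i"
    using decreasing_to_zero_antimono[OF assms(1), of "Suc i" j] assms(3) by (cases "j \<le> i") auto
qed (fact assms(2))

lemma block_index_bounds:
  assumes "decreasing_to_zero s" "0 < x" "x \<le> s 0"
  shows "s (Suc (block_index s x)) < x" "x \<le> s (block_index s x)"
proof -
  obtain j where "s j < x"
    using decreasing_to_zero_exists_less[OF assms(1,2)] by blast
  then have "s (Suc j) < x"
    using decreasing_to_zero_antimono[OF assms(1), of j "Suc j"] by simp
  then show below: "s (Suc (block_index s x)) < x"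
    unfolding block_index_def by (rule LeastI)
  show "x \<le> s (block_index s x)"
  proof (cases "block_index s x")
    case (Suc m)
    then have "\<not> s (Suc m) < x" unfolding block_index_def by (metis lessI not_less_Least)
    then show ?thesis using Suc by simp
  qed (use assms(3) in simp)
qed

lemma block_step_eq:
  assumes "decreasing_to_zero s" "s (Suc j) < x" "x \<le> s j"
  shows "block_step s c x = c j"
proof -
  have "0 < x" "x \<le> s 0"
    using assms decreasing_to_zero_antimono[OF assms(1), of 0 j]
    by (auto simp: decreasing_to_zero_def intro: less_trans)
  then show ?thesis using block_index_eqI[OF assms] by (simp add: block_step_def)
qed

lemma block_step_nonneg: "(\<And>i. 0 \<le> c i) \<Longrightarrow> 0 \<le> block_step s c x"
  by (simp add: block_step_def)

lemma block_step_le: "(\<And>i. c i \<le> M) \<Longrightarrow> 0 \<le> M \<Longrightarrow> block_step s c x \<le> M"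
  by (simp add: block_step_def)

lemma block_step_antitone:
  assumes "decreasing_to_zero s" "\<And>i. 0 \<le> c i" "incseq c" "0 < x" "x \<le> y"
  shows "block_step s c y \<le> block_step s c x"
proof (cases "y \<le> s 0")
  case True
  have "s (Suc (block_index s x)) < y"
    using block_index_bounds[OF assms(1,4)] True assms(5) by fastforce
  then have "block_index s y \<le> block_index s x"
    unfolding block_index_def by (rule Least_le)
  then show ?thesis
    using True assms(3-5) by (simp add: block_step_def incseqD)
qed (simp add: block_step_def assms(2))

lemma borel_measurable_block_step [measurable]: "block_step s c \<in> borel_measurable borel"
proof -
  have "block_index s \<in> measurable borel (count_space UNIV)"
    unfolding block_index_def by measurable
  then have "(\<lambda>x. c (block_index s x)) \<in> borel_measurable borel"
    by measurable
  then show ?thesis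
    unfolding block_step_def by measurable
qed

lemma set_nn_integral_block_step_split:
  assumes "decreasing_to_zero s" "\<And>i. 0 \<le> c i" "s (Suc j) \<le> t" "t \<le> s j"
  shows "(\<integral>\<^sup>+x\<in>{0<..t}. ennreal (block_step s c x) \<partial>lborel)
       = (\<integral>\<^sup>+x\<in>{0<..s (Suc j)}. ennreal (block_step s c x) \<partial>lborel) + ennreal (c j * (t - s (Suc j)))"
proof -
  have "0 < s (Suc j)" using assms(1) by (simp add: decreasing_to_zero_def)
  have "ennreal (block_step s c x) * indicator {0<..t} x
      = ennreal (block_step s c x) * indicator {0<..s (Suc j)} x
        + ennreal (c j) * indicator {s (Suc j)<..t} x"
    for x
  proof (cases "s (Suc j) < x \<and> x \<le> t")
    case True
    then show ?thesis
      using block_step_eq[OF assms(1), of j x] assms(4) \<open>0 < s (Suc j)\<close> by (simp add: indicator_def)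
  next
    case False
    then have "indicator {0<..t} x = (indicator {0<..s (Suc j)} x :: ennreal)"
      "indicator {s (Suc j)<..t} x = (0 :: ennreal)"
      using assms(3) by (auto simp: indicator_def)
    then show ?thesis by simp
  qed
  then have "(\<integral>\<^sup>+x\<in>{0<..t}. ennreal (block_step s c x) \<partial>lborel)
      = (\<integral>\<^sup>+x\<in>{0<..s (Suc j)}. ennreal (block_step s c x) \<partial>lborel) + ennreal (c j) * ennreal (t - s (Suc j))"
    using assms(3) by (simp add: nn_integral_add nn_integral_cmult_indicator)
  then show ?thesis using assms(2)[of j] assms(3) by (simp add: ennreal_mult)
qed

lemma set_nn_integral_block_step_beyond:
  assumes "s 0 \<le> t"
  shows "(\<integral>\<^sup>+x\<in>{0<..t}. ennreal (block_step s c x) \<partial>lborel)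
       = (\<integral>\<^sup>+x\<in>{0<..s 0}. ennreal (block_step s c x) \<partial>lborel)"
  using assms by (intro nn_integral_cong) (auto simp: block_step_def indicator_def)

lemma set_nn_integral_block_step_le:
  assumes "\<And>i. c i \<le> M" "0 \<le> M" "0 \<le> u"
  shows "(\<integral>\<^sup>+x\<in>{0<..u}. ennreal (block_step s c x) \<partial>lborel) \<le> ennreal (M * u)"
proof -
  have "(\<integral>\<^sup>+x\<in>{0<..u}. ennreal (block_step s c x) \<partial>lborel) \<le> (\<integral>\<^sup>+x. ennreal M * indicator {0<..u} x \<partial>lborel)"
    using block_step_le[of c M s, OF assms(1,2)]
    by (intro nn_integral_mono) (simp add: indicator_def ennreal_leI)
  also have "\<dots> = ennreal (M * u)"
    using assms by (simp add: nn_integral_cmult_indicator ennreal_mult)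
  finally show ?thesis .
qed

lemma set_nn_integral_block_step_tail:
  assumes "decreasing_to_zero s" "\<And>i. 0 \<le> c i"
  shows "(\<integral>\<^sup>+x\<in>{0<..s j}. ennreal (block_step s c x) \<partial>lborel)
       = (\<Sum>i. ennreal (c (i + j) * (s (i + j) - s (Suc (i + j)))))"
proof -
  have s_pos: "0 < s i" and s_Suc_less: "s (Suc i) < s i" for i
    using assms(1) by (simp_all add: decreasing_to_zero_def)
  have pointwise: "ennreal (block_step s c x) * indicator {0<..s j} x
      = (\<Sum>i. ennreal (c (i + j)) * indicator {s (Suc (i + j))<..s (i + j)} x)" for x
  proof (cases "0 < x \<and> x \<le> s j")
    case True
    define m where "m = block_index s x"
    have x0: "x \<le> s 0"
      using True decreasing_to_zero_antimono[OF assms(1), of 0 j] by simp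
    have m: "s (Suc m) < x" "x \<le> s m"
      using block_index_bounds[OF assms(1) _ x0] True unfolding m_def by auto
    have "j \<le> m"
      using m True decreasing_to_zero_antimono[OF assms(1), of "Suc m" j] by (cases "j \<le> m") auto
    have "ennreal (c (i + j)) * indicator {s (Suc (i + j))<..s (i + j)} x
        = (if i = m - j then ennreal (c (i + j)) else 0)" for i
    proof (cases "i = m - j")
      case True
      then show ?thesis using m \<open>j \<le> m\<close> by (simp add: indicator_def)
    next
      case False
      then have "m \<noteq> i + j" using \<open>j \<le> m\<close> by auto
      then show ?thesis
        using block_index_eqI[OF assms(1), of "i + j" x] False by (auto simp: indicator_def m_def)
    qed
    then have "(\<Sum>i. ennreal (c (i + j)) * indicator {s (Suc (i + j))<..s (i + j)} x)
        = (\<Sum>i. if i = m - j then ennreal (c (i + j)) else 0)"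
      by simp
    also have "\<dots> = ennreal (c m)"
      using sums_single[of "m - j" "\<lambda>i. ennreal (c (i + j))", THEN sums_unique] \<open>j \<le> m\<close> by simp
    finally show ?thesis
      using True block_step_eq[OF assms(1) m] by simp
  next
    case False
    then have "x \<notin> {s (Suc (i + j))<..s (i + j)}" for i
      using decreasing_to_zero_antimono[OF assms(1), of j "i + j"] s_pos[of "Suc (i + j)"] by auto
    then have "indicator {s (Suc (i + j))<..s (i + j)} x = (0 :: ennreal)" for i
      by simp
    moreover have "indicator {0<..s j} x = (0 :: ennreal)"
      using False by (simp add: indicator_def)
    ultimately show ?thesis by simp
  qed
  have "(\<integral>\<^sup>+x\<in>{0<..s j}. ennreal (block_step s c x) \<partial>lborel)
      = (\<Sum>i. \<integral>\<^sup>+x. ennreal (c (i + j)) * indicator {s (Suc (i + j))<..s (i + j)} x \<partial>lborel)"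
    unfolding pointwise by (rule nn_integral_suminf) simp
  also have "\<dots> = (\<Sum>i. ennreal (c (i + j) * (s (i + j) - s (Suc (i + j)))))"
    by (simp add: nn_integral_cmult_indicator ennreal_mult assms(2) less_imp_le[OF s_Suc_less])
  finally show ?thesis .
qed

lemma ennreal_add_le_of_le:
  assumes "A \<le> ennreal x" "0 \<le> x" "0 \<le> y" "x + y \<le> z"
  shows "A + ennreal y \<le> ennreal z"
proof -
  have "A + ennreal y \<le> ennreal x + ennreal y" using assms(1) by (rule add_right_mono)
  also have "\<dots> = ennreal (x + y)" using assms(2,3) by (simp add: ennreal_plus)
  also have "\<dots> \<le> ennreal z" using assms(4) by (rule ennreal_leI)
  finally show ?thesis .
qed

lemma rearr_le_of_antitone_majorant:
  assumes "\<Omega> \<subseteq> {0<..}" "\<And>x. x \<in> \<Omega> \<Longrightarrow> \<bar>f x\<bar> \<le> g x"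
    and "\<And>x y. 0 < x \<Longrightarrow> x \<le> y \<Longrightarrow> g y \<le> g x" "0 < r" "0 \<le> g r"
  shows "rearr \<Omega> f r \<le> ennreal (g r)"
proof -
  have "x < r" if x: "x \<in> \<Omega>" and less: "ennreal (g r) < ennreal \<bar>f x\<bar>" for x
  proof (rule ccontr)
    assume "\<not> x < r"
    then have "\<bar>f x\<bar> \<le> g r" using assms(2)[OF x] assms(3)[of r x] assms(4) by force
    then show False using less by (simp add: ennreal_leI leD)
  qed
  then have "{x\<in>\<Omega>. ennreal (g r) < ennreal \<bar>f x\<bar>} \<subseteq> {0<..<r}"
    using assms(1) by auto
  then have "emeasure lebesgue {x\<in>\<Omega>. ennreal (g r) < ennreal \<bar>f x\<bar>} \<le> ennreal r"
    using emeasure_mono[of _ "{0<..<r}" lebesgue] assms(4) by simp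
  then show ?thesis unfolding rearr_def by (intro Inf_lower) simp
qed

lemma marc_norm_le_of_antitone_majorant:
  assumes "\<Omega> \<subseteq> {0<..}" "\<And>t. t \<in> \<Omega> \<Longrightarrow> 0 < \<phi> t"
    and "g \<in> borel_measurable borel" "\<And>x. 0 \<le> g x" "\<And>x y. 0 < x \<Longrightarrow> x \<le> y \<Longrightarrow> g y \<le> g x"
    and "\<And>t. t \<in> \<Omega> \<Longrightarrow> (\<integral>\<^sup>+x\<in>{0<..t}. ennreal (g x) \<partial>lborel) \<le> ennreal (t / \<phi> t)"
    and "0 \<le> C" "\<And>x. x \<in> \<Omega> \<Longrightarrow> \<bar>f x\<bar> \<le> C * g x"
  shows "marc_norm \<Omega> \<phi> f \<le> ennreal C"
  unfolding marc_norm_def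
proof (rule SUP_least)
  fix t assume t: "t \<in> \<Omega>"
  then have t_pos: "0 < t" using assms(1) by auto
  have rearr_le: "rearr \<Omega> f r \<le> ennreal C * ennreal (g r)" if "0 < r" for r
    using rearr_le_of_antitone_majorant[of \<Omega> f "\<lambda>x. C * g x" r] assms that
    by (simp add: mult_left_mono ennreal_mult)
  have "(\<integral>\<^sup>+x\<in>{0<..t}. rearr \<Omega> f x \<partial>lborel)
      \<le> (\<integral>\<^sup>+x. ennreal C * (ennreal (g x) * indicator {0<..t} x) \<partial>lborel)"
    using rearr_le by (intro nn_integral_mono) (auto simp: indicator_def)
  also have "\<dots> = ennreal C * (\<integral>\<^sup>+x\<in>{0<..t}. ennreal (g x) \<partial>lborel)"
    by (intro nn_integral_cmult) (use assms(3) in measurable)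
  also have "\<dots> \<le> ennreal C * ennreal (t / \<phi> t)"
    using assms(6)[OF t] by (rule mult_left_mono) simp
  finally have "ennreal (\<phi> t / t) * (\<integral>\<^sup>+x\<in>{0<..t}. rearr \<Omega> f x \<partial>lborel)
      \<le> ennreal (\<phi> t / t) * (ennreal C * ennreal (t / \<phi> t))"
    by (rule mult_left_mono) simp
  also have "\<dots> = ennreal C"
    using t_pos assms(2)[OF t] assms(7)
    by (simp add: ennreal_mult'[symmetric] mult.left_commute del: ennreal_mult_divide_eq)
  finally show "ennreal (\<phi> t / t) * (\<integral>\<^sup>+x\<in>{0<..t}. rearr \<Omega> f x \<partial>lborel) \<le> ennreal C" .
qed

lemma rearr_ge_of_large_set:
  assumes "\<Omega> \<in> sets lebesgue" "f \<in> borel_measurable lebesgue"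
    and "B \<subseteq> \<Omega>" "B \<in> sets lebesgue" "ennreal r < emeasure lebesgue B" "\<And>x. x \<in> B \<Longrightarrow> v \<le> \<bar>f x\<bar>"
  shows "ennreal v \<le> rearr \<Omega> f r"
  unfolding rearr_def
proof (rule Inf_greatest)
  fix \<sigma> assume "\<sigma> \<in> {\<sigma>. emeasure lebesgue {x\<in>\<Omega>. \<sigma> < ennreal \<bar>f x\<bar>} \<le> ennreal r}"
  then have small: "emeasure lebesgue {x\<in>\<Omega>. \<sigma> < ennreal \<bar>f x\<bar>} \<le> ennreal r" by simp
  show "ennreal v \<le> \<sigma>"
  proof (rule ccontr)
    assume "\<not> ennreal v \<le> \<sigma>"
    then have "\<sigma> < ennreal \<bar>f x\<bar>" if "x \<in> B" for x
      using assms(6)[OF that] by (metis ennreal_leI less_le_trans not_le)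
    then have "B \<subseteq> {x\<in>\<Omega>. \<sigma> < ennreal \<bar>f x\<bar>}"
      using assms(3) by auto
    moreover have "{x\<in>\<Omega>. \<sigma> < ennreal \<bar>f x\<bar>} \<in> sets lebesgue"
      using assms(1,2) by measurable
    ultimately have "emeasure lebesgue B \<le> ennreal r"
      using small emeasure_mono order_trans by blast
    then show False using assms(5) by simp
  qed
qed

lemma marc_norm_ge_of_interval:
  assumes "\<Omega> \<in> sets lebesgue" "f \<in> borel_measurable lebesgue"
    and "u < w" "{u<..w} \<subseteq> \<Omega>" "w - u \<in> \<Omega>" "0 < \<phi> (w - u)"
    and "0 \<le> v" "\<And>x. u < x \<Longrightarrow> x \<le> w \<Longrightarrow> v \<le> \<bar>f x\<bar>"
  shows "ennreal (v * \<phi> (w - u)) \<le> marc_norm \<Omega> \<phi> f"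
proof -
  define d where "d = w - u"
  have d: "0 < d" using assms(3) by (simp add: d_def)
  have "ennreal v \<le> rearr \<Omega> f r" if "0 < r" "r < d" for r
    using assms that
    by (intro rearr_ge_of_large_set[where B = "{u<..w}"]) (auto simp: d_def intro: ennreal_lessI)
  then have "(\<integral>\<^sup>+x. ennreal v * indicator {0<..<d} x \<partial>lborel) \<le> (\<integral>\<^sup>+x\<in>{0<..d}. rearr \<Omega> f x \<partial>lborel)"
    by (intro nn_integral_mono) (auto simp: indicator_def)
  then have "ennreal (v * d) \<le> (\<integral>\<^sup>+x\<in>{0<..d}. rearr \<Omega> f x \<partial>lborel)"
    using d assms(7) by (simp add: nn_integral_cmult_indicator ennreal_mult)
  then have "ennreal (\<phi> d / d) * ennreal (v * d) \<le> ennreal (\<phi> d / d) * (\<integral>\<^sup>+x\<in>{0<..d}. rearr \<Omega> f x \<partial>lborel)"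
    by (rule mult_left_mono) simp
  also have "\<dots> \<le> marc_norm \<Omega> \<phi> f"
    unfolding marc_norm_def using assms(5) by (intro SUP_upper) (simp add: d_def)
  also have "ennreal (\<phi> d / d) * ennreal (v * d) = ennreal (v * \<phi> d)"
    using d assms(6,7) by (simp add: ennreal_mult[symmetric] d_def del: ennreal_mult_divide_eq)
  finally show ?thesis by (simp add: d_def)
qed

lemma lebesgue_measurable_block_step: "block_step s c \<in> borel_measurable lebesgue"
proof -
  have "block_step s c \<in> borel_measurable lborel" by simp
  then show ?thesis by (rule measurable_completion)
qed

lemma abs_le_linf_norm: "y \<in> linf \<Longrightarrow> \<bar>y n\<bar> \<le> linf_norm y"
  unfolding linf_def linf_norm_def
  by (rule cSUP_upper) (auto simp: bounded_iff intro: bdd_aboveI2)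

lemma linf_norm_nonneg: "y \<in> linf \<Longrightarrow> 0 \<le> linf_norm y"
  using abs_le_linf_norm[of y 0] by simp

lemma linf_norm_le: "(\<And>n. \<bar>y n\<bar> \<le> r) \<Longrightarrow> linf_norm y \<le> r"
  unfolding linf_norm_def by (rule cSUP_least) auto

definition block_embedding :: "(nat \<Rightarrow> real) \<Rightarrow> (nat \<Rightarrow> real) \<Rightarrow> (nat \<Rightarrow> real) \<Rightarrow> real \<Rightarrow> real" where
  "block_embedding s c y = block_step s (\<lambda>j. y (fst (prod_decode j)) * c j)"

lemma block_embedding_linear:
  "block_embedding s c (\<lambda>n. a * x n + b * y n) z = a * block_embedding s c x z + b * block_embedding s c y z"
  by (simp add: block_embedding_def block_step_def algebra_simps)

lemma block_embedding_max:
  "(\<And>i. 0 \<le> c i) \<Longrightarrow>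
    block_embedding s c (\<lambda>n. max (x n) (y n)) z = max (block_embedding s c x z) (block_embedding s c y z)"
  by (simp add: block_embedding_def block_step_def max_mult_distrib_right)

lemma abs_block_embedding_le:
  "y \<in> linf \<Longrightarrow> (\<And>i. 0 \<le> c i) \<Longrightarrow> \<bar>block_embedding s c y x\<bar> \<le> linf_norm y * block_step s c x"
  by (auto simp: block_embedding_def block_step_def abs_mult intro: mult_right_mono abs_le_linf_norm)

locale quasi_concave_initial_interval =
  fixes \<Omega> :: "real set" and \<phi> :: "real \<Rightarrow> real"
  assumes subset_pos: "\<Omega> \<subseteq> {0<..}"
    and downward_closed: "\<And>x y. x \<in> \<Omega> \<Longrightarrow> 0 < y \<Longrightarrow> y \<le> x \<Longrightarrow> y \<in> \<Omega>"
    and nonempty: "\<Omega> \<noteq> {}"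
    and quasi_concave: "quasi_concave_on \<Omega> \<phi>"
begin

lemma pos: "x \<in> \<Omega> \<Longrightarrow> 0 < x"
  using subset_pos by auto

lemma phi_pos: "t \<in> \<Omega> \<Longrightarrow> 0 < \<phi> t"
  using quasi_concave by (simp add: quasi_concave_on_def)

lemma phi_mono: "x \<in> \<Omega> \<Longrightarrow> y \<in> \<Omega> \<Longrightarrow> x \<le> y \<Longrightarrow> \<phi> x \<le> \<phi> y"
  using quasi_concave by (simp add: quasi_concave_on_def mono_on_def)

lemma ratio_mono:
  assumes "x \<in> \<Omega>" "y \<in> \<Omega>" "x \<le> y"
  shows "x / \<phi> x \<le> y / \<phi> y"
proof -
  have "\<phi> y / y \<le> \<phi> x / x"
    using quasi_concave assms by (simp add: quasi_concave_on_def)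
  then show ?thesis
    using pos phi_pos assms by (simp add: field_simps mult.commute)
qed

lemma sets_lebesgue: "\<Omega> \<in> sets lebesgue"
proof -
  have "is_interval \<Omega>"
    unfolding is_interval_1 using downward_closed pos by (meson less_le_trans)
  then have "\<Omega> \<in> sets lborel"
    by (simp add: real_interval_borel_measurable)
  then show ?thesis by (rule sets_completionI_sets)
qed

lemma marc_norm_block_embedding_le:
  assumes "decreasing_to_zero s" "\<And>i. 0 \<le> c i" "incseq c" "y \<in> linf"
    and "\<And>t. t \<in> \<Omega> \<Longrightarrow> (\<integral>\<^sup>+x\<in>{0<..t}. ennreal (block_step s c x) \<partial>lborel) \<le> ennreal (t / \<phi> t)"
  shows "marc_norm \<Omega> \<phi> (block_embedding s c y) \<le> ennreal (linf_norm y)"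
  using assms phi_pos subset_pos abs_le_linf_norm[of y 0]
  by (intro marc_norm_le_of_antitone_majorant[where g = "block_step s c"]
      block_step_nonneg block_step_antitone abs_block_embedding_le) auto

lemma marc_norm_block_embedding_ge:
  assumes "decreasing_to_zero s" "s 0 \<in> \<Omega>" "\<And>i. 0 \<le> c i"
  shows "ennreal (\<bar>y (fst (prod_decode j))\<bar> * (c j * \<phi> (s j - s (Suc j))))
    \<le> marc_norm \<Omega> \<phi> (block_embedding s c y)"
proof -
  have s: "0 < s (Suc j)" "s (Suc j) < s j" "s j \<le> s 0"
    using assms(1) decreasing_to_zero_antimono[OF assms(1), of 0 j] by (auto simp: decreasing_to_zero_def)
  then have block: "{s (Suc j)<..s j} \<subseteq> \<Omega>" "s j - s (Suc j) \<in> \<Omega>"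
    using downward_closed[OF assms(2)] by auto
  have "\<bar>block_embedding s c y x\<bar> = \<bar>y (fst (prod_decode j))\<bar> * c j" if "s (Suc j) < x" "x \<le> s j" for x
    using block_step_eq[OF assms(1) that] assms(3) by (simp add: block_embedding_def abs_mult)
  then have "ennreal (\<bar>y (fst (prod_decode j))\<bar> * c j * \<phi> (s j - s (Suc j)))
      \<le> marc_norm \<Omega> \<phi> (block_embedding s c y)"
    using s block assms(3) phi_pos sets_lebesgue
    by (intro marc_norm_ge_of_interval) (auto simp: block_embedding_def lebesgue_measurable_block_step)
  then show ?thesis by (simp add: mult.assoc)
qed

lemma integral_bound_of_block_bounds:
  assumes "decreasing_to_zero s" "s 0 \<in> \<Omega>" "\<And>i. 0 \<le> c i"
    and block_bound: "\<And>j t. s (Suc j) < t \<Longrightarrow> t \<le> s j \<Longrightarrow>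
      (\<integral>\<^sup>+x\<in>{0<..s (Suc j)}. ennreal (block_step s c x) \<partial>lborel) + ennreal (c j * (t - s (Suc j)))
        \<le> ennreal (t / \<phi> t)"
    and "t \<in> \<Omega>"
  shows "(\<integral>\<^sup>+x\<in>{0<..t}. ennreal (block_step s c x) \<partial>lborel) \<le> ennreal (t / \<phi> t)"
proof -
  have below_s0: "(\<integral>\<^sup>+x\<in>{0<..u}. ennreal (block_step s c x) \<partial>lborel) \<le> ennreal (u / \<phi> u)"
    if "0 < u" "u \<le> s 0" for u
  proof -
    define j where "j = block_index s u"
    have "s (Suc j) < u" "u \<le> s j"
      using block_index_bounds[OF assms(1) that] by (simp_all add: j_def)
    then show ?thesis
      using set_nn_integral_block_step_split[OF assms(1,3), of j u] block_bound by simp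
  qed
  show ?thesis
  proof (cases "t \<le> s 0")
    case False
    then have "(\<integral>\<^sup>+x\<in>{0<..t}. ennreal (block_step s c x) \<partial>lborel)
        = (\<integral>\<^sup>+x\<in>{0<..s 0}. ennreal (block_step s c x) \<partial>lborel)"
      by (intro set_nn_integral_block_step_beyond) simp
    also have "\<dots> \<le> ennreal (s 0 / \<phi> (s 0))"
      using below_s0 pos[OF assms(2)] by simp
    also have "\<dots> \<le> ennreal (t / \<phi> t)"
      using ratio_mono[OF assms(2,5)] False by (simp add: ennreal_leI)
    finally show ?thesis .
  qed (use below_s0 pos[OF assms(5)] in simp)
qed

lemma marc_norm_block_embedding:
  assumes "decreasing_to_zero s" "s 0 \<in> \<Omega>" "\<And>i. 0 \<le> c i" "incseq c" "y \<in> linf"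
    and integral_bound: "\<And>t. t \<in> \<Omega> \<Longrightarrow> (\<integral>\<^sup>+x\<in>{0<..t}. ennreal (block_step s c x) \<partial>lborel) \<le> ennreal (t / \<phi> t)"
    and eventually_ge: "\<And>z. 0 < z \<Longrightarrow> z < 1 \<Longrightarrow> eventually (\<lambda>j. z \<le> c j * \<phi> (s j - s (Suc j))) sequentially"
  shows "marc_norm \<Omega> \<phi> (block_embedding s c y) = ennreal (linf_norm y)"
proof -
  obtain r where r: "marc_norm \<Omega> \<phi> (block_embedding s c y) = ennreal r" "0 \<le> r" "r \<le> linf_norm y"
    using marc_norm_block_embedding_le[OF assms(1,3-5) integral_bound] linf_norm_nonneg[OF assms(5)]
    by (cases "marc_norm \<Omega> \<phi> (block_embedding s c y)") (auto simp: top_unique ennreal_le_iff)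
  have "\<bar>y n\<bar> \<le> r" for n
  proof (rule field_le_mult_one_interval)
    fix z :: real assume "0 < z" "z < 1"
    then obtain J where J: "\<And>j. J \<le> j \<Longrightarrow> z \<le> c j * \<phi> (s j - s (Suc j))"
      using eventually_ge by (auto simp: eventually_sequentially)
    define j where "j = prod_encode (n, J)"
    have "z \<le> c j * \<phi> (s j - s (Suc j))"
      using J le_prod_encode_2[of J n] by (simp add: j_def)
    then have "z * \<bar>y n\<bar> \<le> \<bar>y n\<bar> * (c j * \<phi> (s j - s (Suc j)))"
      by (metis abs_ge_zero mult.commute mult_left_mono)
    also have "\<dots> \<le> r"
      using marc_norm_block_embedding_ge[where c = c and y = y and j = j, OF assms(1-3)] r
      by (simp add: j_def)
    finally show "z * \<bar>y n\<bar> \<le> r" .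
  qed
  then show ?thesis using r linf_norm_le[of y r] by simp
qed

theorem lattice_isometric_embedding_block_embedding:
  assumes "decreasing_to_zero s" "s 0 \<in> \<Omega>" "\<And>i. 0 \<le> c i" "incseq c"
    and "\<And>t. t \<in> \<Omega> \<Longrightarrow> (\<integral>\<^sup>+x\<in>{0<..t}. ennreal (block_step s c x) \<partial>lborel) \<le> ennreal (t / \<phi> t)"
    and "\<And>z. 0 < z \<Longrightarrow> z < 1 \<Longrightarrow> eventually (\<lambda>j. z \<le> c j * \<phi> (s j - s (Suc j))) sequentially"
  shows "lattice_isometric_embedding \<Omega> \<phi> (block_embedding s c)"
  unfolding lattice_isometric_embedding_def
proof (intro conjI ballI allI)
  fix y assume y: "y \<in> linf"
  have "(\<lambda>x. indicator \<Omega> x *\<^sub>R block_embedding s c y x) \<in> borel_measurable lebesgue"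
    using sets_lebesgue lebesgue_measurable_block_step unfolding block_embedding_def by measurable
  then show "block_embedding s c y \<in> marc_space \<Omega> \<phi>"
    unfolding marc_space_def set_borel_measurable_def
    using marc_norm_block_embedding[OF assms(1-4) y assms(5,6)]
    by simp
qed (use marc_norm_block_embedding[OF assms(1-4) _ assms(5,6)] assms(3) in
      \<open>simp_all add: block_embedding_linear block_embedding_max\<close>)

end

section \<open>Quasi-concave functions with positive infimum\<close>

locale bounded_below_blocks = quasi_concave_initial_interval +
  fixes a :: real and s :: "nat \<Rightarrow> real"
  assumes a_pos: "0 < a"
    and a_le_phi: "\<And>t. t \<in> \<Omega> \<Longrightarrow> a \<le> \<phi> t"
    and phi_approaches_a: "\<And>e. 0 < e \<Longrightarrow> \<exists>t\<in>\<Omega>. \<phi> t < a + e"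
    and double_s_0_in: "2 * s 0 \<in> \<Omega>"
    and phi_double_s_0: "\<phi> (2 * s 0) < 2 * a"
    and s_Suc: "s (Suc j) = s j / 2"
begin

definition level :: "nat \<Rightarrow> real" where
  "level j = 2 / \<phi> (2 * s j) - 1 / a"

lemma s_0_pos: "0 < s 0"
  using pos[OF double_s_0_in] by simp

lemma s_eq: "s j = s 0 * (1 / 2) ^ j"
  by (induction j) (simp_all add: s_Suc)

lemma s_pos: "0 < s j"
  using s_0_pos s_eq[of j] by simp

lemma s_le_s_0: "s j \<le> s 0"
  using s_0_pos s_eq[of j] by (simp add: mult_left_le power_le_one)

lemma double_s_in: "2 * s j \<in> \<Omega>"
  using downward_closed[OF double_s_0_in] s_pos s_le_s_0 by simp

lemma s_in: "s j \<in> \<Omega>"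
  using downward_closed[of "2 * s j" "s j"] double_s_in[of j] s_pos[of j] by simp

lemma decreasing: "decreasing_to_zero s"
proof -
  have "(\<lambda>j. s 0 * (1 / 2) ^ j) \<longlonglongrightarrow> s 0 * 0"
    by (intro tendsto_mult tendsto_const LIMSEQ_power_zero) simp
  then have "s \<longlonglongrightarrow> 0"
    by (simp add: s_eq[symmetric])
  then show ?thesis
    using s_pos by (simp add: decreasing_to_zero_def s_Suc)
qed

lemma level_nonneg: "0 \<le> level j"
proof -
  have "\<phi> (2 * s j) \<le> \<phi> (2 * s 0)"
    using phi_mono[OF double_s_in[of j] double_s_0_in] s_le_s_0[of j] by simp
  then have "\<phi> (2 * s j) < 2 * a"
    using phi_double_s_0 by linarith
  then have "1 / a \<le> 2 / \<phi> (2 * s j)"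
    using phi_pos[OF double_s_in] a_pos by (simp add: field_simps)
  then show ?thesis by (simp add: level_def)
qed

lemma level_le: "level j \<le> 1 / a"
  using a_le_phi[OF double_s_in] a_pos by (simp add: level_def frac_le)

lemma level_incseq: "incseq level"
proof (rule incseq_SucI)
  fix j
  have "\<phi> (2 * s (Suc j)) \<le> \<phi> (2 * s j)"
    using phi_mono[OF s_in[of j] double_s_in[of j]] s_pos[of j] by (simp add: s_Suc)
  then show "level j \<le> level (Suc j)"
    using phi_pos[OF double_s_in] by (simp add: level_def frac_le)
qed

lemma level_Suc: "level (Suc j) = 2 / \<phi> (s j) - 1 / a"
  by (simp add: level_def s_Suc)

lemma level_le_inverse_phi: "level j \<le> 1 / \<phi> (s j)"
proof -
  have "\<phi> (s j) \<le> \<phi> (2 * s j)"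
    using phi_mono[OF s_in[of j] double_s_in[of j]] s_pos[of j] by simp
  then have "2 / \<phi> (2 * s j) \<le> 2 / \<phi> (s j)"
    using phi_pos[OF s_in] by (simp add: frac_le)
  moreover have "1 / \<phi> (s j) \<le> 1 / a"
    using a_le_phi[OF s_in] a_pos by (simp add: frac_le)
  ultimately show ?thesis by (simp add: level_def)
qed

text \<open>The interval \<open>(0, s (Suc (Suc j))]\<close>, where the step function is at most \<open>1 / a\<close>, and the block
  \<open>(s (Suc (Suc j)), s (Suc j)]\<close> have the same length, and \<open>level (Suc j) + 1 / a = 2 / \<phi> (s j)\<close>; so the
  integral up to \<open>s (Suc j)\<close> is at most \<open>s (Suc j) / \<phi> (s j)\<close>.\<close>
lemma block_bound:
  assumes "s (Suc j) < t" "t \<le> s j"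
  shows "(\<integral>\<^sup>+x\<in>{0<..s (Suc j)}. ennreal (block_step s level x) \<partial>lborel) + ennreal (level j * (t - s (Suc j)))
    \<le> ennreal (t / \<phi> t)"
proof (rule ennreal_add_le_of_le)
  let ?u = "s (Suc (Suc j))"
  have "(\<integral>\<^sup>+x\<in>{0<..s (Suc j)}. ennreal (block_step s level x) \<partial>lborel)
      = (\<integral>\<^sup>+x\<in>{0<..?u}. ennreal (block_step s level x) \<partial>lborel) + ennreal (level (Suc j) * ?u)"
    using set_nn_integral_block_step_split[where c = level and j = "Suc j" and t = "s (Suc j)",
      OF decreasing level_nonneg] s_pos
    by (simp add: s_Suc)
  also have "\<dots> \<le> ennreal (1 / a * ?u) + ennreal (level (Suc j) * ?u)"
    using set_nn_integral_block_step_le[OF level_le] a_pos s_pos[of "Suc (Suc j)"]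
    by (intro add_right_mono) simp
  also have "\<dots> = ennreal (1 / a * ?u + level (Suc j) * ?u)"
    using a_pos s_pos[of "Suc (Suc j)"] level_nonneg[of "Suc j"] by (simp add: ennreal_plus)
  also have "1 / a * ?u + level (Suc j) * ?u = s (Suc j) / \<phi> (s j)"
    using phi_pos[OF s_in, of j] by (simp add: level_Suc s_Suc[of "Suc j"] field_simps)
  finally show "(\<integral>\<^sup>+x\<in>{0<..s (Suc j)}. ennreal (block_step s level x) \<partial>lborel) \<le> ennreal (s (Suc j) / \<phi> (s j))" .
  show "0 \<le> s (Suc j) / \<phi> (s j)" "0 \<le> level j * (t - s (Suc j))"
    using s_pos[of "Suc j"] phi_pos[OF s_in, of j] level_nonneg[of j] assms(1) by simp_all
  have "0 < t"
    using s_pos[of "Suc j"] assms(1) by linarith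
  then have "t \<in> \<Omega>"
    using downward_closed[OF s_in _ assms(2)] by blast
  have "level j * (t - s (Suc j)) \<le> (t - s (Suc j)) / \<phi> (s j)"
    using mult_right_mono[OF level_le_inverse_phi, of "t - s (Suc j)" j] assms(1) by simp
  also have "s (Suc j) / \<phi> (s j) + (t - s (Suc j)) / \<phi> (s j) = t / \<phi> (s j)"
    by (simp add: add_divide_distrib[symmetric])
  moreover have "t / \<phi> (s j) \<le> t / \<phi> t"
    using phi_mono[OF \<open>t \<in> \<Omega>\<close> s_in assms(2)] phi_pos[OF \<open>t \<in> \<Omega>\<close>] pos[OF \<open>t \<in> \<Omega>\<close>]
    by (simp add: frac_le)
  ultimately show "s (Suc j) / \<phi> (s j) + level j * (t - s (Suc j)) \<le> t / \<phi> t"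
    by linarith
qed

lemma eventually_level_ge:
  assumes "0 < z" "z < 1"
  shows "eventually (\<lambda>j. z \<le> level j * \<phi> (s j - s (Suc j))) sequentially"
proof -
  obtain t where t: "t \<in> \<Omega>" "\<phi> t < 2 * a / (1 + z)"
    using phi_approaches_a[of "2 * a / (1 + z) - a"] a_pos assms by (auto simp: field_simps)
  have "(\<lambda>j. 2 * s j) \<longlonglongrightarrow> 0"
    using decreasing unfolding decreasing_to_zero_def by (intro tendsto_mult_right_zero) simp
  then have "eventually (\<lambda>j. 2 * s j < t) sequentially"
    using pos[OF t(1)] by (rule order_tendstoD(2))
  then show ?thesis
  proof eventually_elim
    case (elim j)
    have "\<phi> (2 * s j) < 2 * a / (1 + z)"
      using phi_mono[OF double_s_in[of j] t(1) less_imp_le[OF elim]] t(2) by linarith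
    then have "(1 + z) * \<phi> (2 * s j) < 2 * a"
      using assms(1) by (simp add: pos_less_divide_eq mult.commute)
    then have "1 + z < 2 * a / \<phi> (2 * s j)"
      using phi_pos[OF double_s_in, of j] by (simp add: pos_less_divide_eq)
    moreover have "level j * a = 2 * a / \<phi> (2 * s j) - 1"
      using a_pos by (simp add: level_def algebra_simps)
    ultimately have "z \<le> level j * a"
      by linarith
    also have "\<dots> \<le> level j * \<phi> (s j - s (Suc j))"
      using a_le_phi[OF s_in, of "Suc j"] level_nonneg by (simp add: s_Suc mult_left_mono)
    finally show ?case .
  qed
qed

lemma lattice_isometric_embedding: "lattice_isometric_embedding \<Omega> \<phi> (block_embedding s level)"
  using decreasing s_in level_nonneg level_incseq eventually_level_ge
    integral_bound_of_block_bounds[OF decreasing s_in level_nonneg block_bound]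
  by (intro lattice_isometric_embedding_block_embedding) auto

end

context quasi_concave_initial_interval
begin

lemma exists_lattice_isometric_embedding_if_bounded_below:
  assumes "0 < a\<^sub>0" "\<And>t. t \<in> \<Omega> \<Longrightarrow> a\<^sub>0 \<le> \<phi> t"
  shows "\<exists>T. lattice_isometric_embedding \<Omega> \<phi> T"
proof -
  define a where "a = Inf (\<phi> ` \<Omega>)"
  have bdd: "bdd_below (\<phi> ` \<Omega>)"
    using assms(2) by (intro bdd_belowI[of _ a\<^sub>0]) auto
  have a_pos: "0 < a"
    using assms nonempty unfolding a_def by (intro less_le_trans[OF assms(1)] cInf_greatest) auto
  have a_le: "\<And>t. t \<in> \<Omega> \<Longrightarrow> a \<le> \<phi> t"
    unfolding a_def using bdd by (intro cInf_lower) auto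
  have approx: "\<exists>t\<in>\<Omega>. \<phi> t < a + e" if "0 < e" for e
    using cInf_less_iff[OF _ bdd, of "a + e"] nonempty that by (auto simp: a_def)
  obtain t where t: "t \<in> \<Omega>" "\<phi> t < 2 * a"
    using approx[OF a_pos] by auto
  have "bounded_below_blocks_axioms \<Omega> \<phi> a (\<lambda>j. t / 2 ^ Suc j)"
    using a_pos a_le approx t by unfold_locales simp_all
  then have "bounded_below_blocks \<Omega> \<phi> a (\<lambda>j. t / 2 ^ Suc j)"
    by (intro bounded_below_blocks.intro quasi_concave_initial_interval_axioms)
  then show ?thesis
    using bounded_below_blocks.lattice_isometric_embedding by blast
qed

end

section \<open>Quasi-concave functions tending to zero\<close>

text \<open>At \<open>b k\<close>, below \<open>s k\<close>, the function \<open>\<phi>\<close> is already small compared with \<open>\<phi> (s k / 2)\<close>; the next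
  point \<open>s (Suc k)\<close> is then so small that \<open>t / \<phi> t\<close> is tiny there, which makes the integral over all
  later blocks at most \<open>budget k\<close>.\<close>

locale vanishing_blocks = quasi_concave_initial_interval +
  fixes \<eta> s b :: "nat \<Rightarrow> real"
  assumes eta_pos: "0 < \<eta> k"
    and eta_le_one: "\<eta> k \<le> 1"
    and eta_antimono: "\<eta> (Suc k) \<le> \<eta> k"
    and eta_tendsto_zero: "\<eta> \<longlonglongrightarrow> 0"
    and s_0_in: "s 0 \<in> \<Omega>"
    and b_pos: "0 < b k"
    and b_le: "b k \<le> s k"
    and phi_b_le: "\<phi> (b k) \<le> \<eta> (Suc k) * \<phi> (s k / 2) / 2"
    and s_Suc_pos: "0 < s (Suc k)"
    and s_Suc_le: "s (Suc k) \<le> b k / 2"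
    and ratio_s_Suc_le: "s (Suc k) / \<phi> (s (Suc k)) \<le> \<eta> k * (b k / \<phi> (b k)) / 4"
begin

definition width :: "nat \<Rightarrow> real" where
  "width k = s k - s (Suc k)"

definition level :: "nat \<Rightarrow> real" where
  "level k = (1 - \<eta> k) / \<phi> (width k)"

definition budget :: "nat \<Rightarrow> real" where
  "budget k = \<eta> k * (b k / \<phi> (b k)) / 2"

lemma s_Suc_le_half: "s (Suc k) \<le> s k / 2"
  using s_Suc_le[of k] b_le[of k] by linarith

lemma s_pos: "0 < s k"
  using s_Suc_pos pos[OF s_0_in] by (cases k) auto

lemma s_in: "s k \<in> \<Omega>"
proof (induction k)
  case (Suc k)
  have "s (Suc k) \<le> s k"
    using s_Suc_le_half[of k] s_pos[of k] by linarith
  then show ?case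
    using downward_closed[OF Suc.IH s_pos[of "Suc k"]] by blast
qed (fact s_0_in)

lemma decreasing: "decreasing_to_zero s"
proof -
  have geometric: "s k \<le> s 0 * (1 / 2) ^ k" for k
  proof (induction k)
    case (Suc k)
    have "s (Suc k) \<le> s k / 2" by (rule s_Suc_le_half)
    also have "\<dots> \<le> s 0 * (1 / 2) ^ k / 2" using Suc by simp
    finally show ?case by simp
  qed simp
  have "(\<lambda>k. s 0 * (1 / 2) ^ k) \<longlonglongrightarrow> 0"
    by (intro tendsto_mult_right_zero LIMSEQ_power_zero) simp
  then have "s \<longlonglongrightarrow> 0"
    using s_pos geometric
    by (intro tendsto_sandwich[of "\<lambda>_. 0" s sequentially "\<lambda>k. s 0 * (1 / 2) ^ k"])
      (simp_all add: less_imp_le)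
  moreover have "s (Suc k) < s k" for k
    using s_Suc_le_half[of k] s_pos[of k] by linarith
  ultimately show ?thesis
    using s_pos by (simp add: decreasing_to_zero_def)
qed

lemma b_in: "b k \<in> \<Omega>"
  using downward_closed[OF s_in b_pos b_le] .

lemma half_s_in: "s k / 2 \<in> \<Omega>"
  using downward_closed[OF s_in[of k], of "s k / 2"] s_pos[of k] by simp

lemma width_pos: "0 < width k"
  using decreasing by (simp add: width_def decreasing_to_zero_def)

lemma half_s_le_width: "s k / 2 \<le> width k"
  using s_Suc_le_half by (simp add: width_def)

lemma width_le_s: "width k \<le> s k"
  using s_pos[of "Suc k"] by (simp add: width_def)

lemma width_in: "width k \<in> \<Omega>"
  using downward_closed[OF s_in width_pos width_le_s] .

lemma level_nonneg: "0 \<le> level k"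
  using eta_le_one[of k] phi_pos[OF width_in, of k] by (simp add: level_def)

lemma level_incseq: "incseq level"
proof (rule incseq_SucI)
  fix k
  have "width (Suc k) \<le> width k"
    using width_le_s[of "Suc k"] half_s_le_width[of k] s_Suc_le_half[of k] by simp
  then show "level k \<le> level (Suc k)"
    unfolding level_def using phi_mono[OF width_in width_in] phi_pos[OF width_in] eta_antimono eta_le_one
    by (intro frac_le) (auto simp: algebra_simps)
qed

lemma level_le_inverse_phi_half: "level k \<le> 1 / \<phi> (s k / 2)"
  unfolding level_def
  using phi_mono[OF half_s_in width_in half_s_le_width] phi_pos[OF half_s_in] eta_pos
  by (intro frac_le) (auto simp: less_imp_le)

lemma level_mult_min_le:
  assumes "t \<in> \<Omega>"
  shows "level k * min t (width k) \<le> (1 - \<eta> k) * (t / \<phi> t)"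
proof (cases "t \<le> width k")
  case True
  then have "t / \<phi> (width k) \<le> t / \<phi> t"
    using phi_mono[OF assms width_in] phi_pos[OF assms] pos[OF assms] by (simp add: frac_le)
  then have "(1 - \<eta> k) * (t / \<phi> (width k)) \<le> (1 - \<eta> k) * (t / \<phi> t)"
    using eta_le_one[of k] by (intro mult_left_mono) simp_all
  then show ?thesis
    using True by (simp add: level_def)
next
  case False
  then have "width k / \<phi> (width k) \<le> t / \<phi> t"
    using ratio_mono[OF width_in assms] by simp
  then have "(1 - \<eta> k) * (width k / \<phi> (width k)) \<le> (1 - \<eta> k) * (t / \<phi> t)"
    using eta_le_one[of k] by (intro mult_left_mono) simp_all
  then show ?thesis
    using False by (simp add: level_def)
qed

lemma budget_nonneg: "0 \<le> budget k"
  using eta_pos b_pos phi_pos[OF b_in] by (simp add: budget_def less_imp_le)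

lemma budget_le_ratio:
  assumes "t \<in> \<Omega>" "b k \<le> t"
  shows "budget k \<le> \<eta> k * (t / \<phi> t) / 2"
  unfolding budget_def using ratio_mono[OF b_in assms] eta_pos[of k]
  by (intro divide_right_mono mult_left_mono) simp_all

lemma ratio_s_Suc_le_budget: "s (Suc k) / \<phi> (s (Suc k)) \<le> budget k / 2"
proof -
  have "budget k / 2 = \<eta> k * (b k / \<phi> (b k)) / 4"
    by (simp add: budget_def)
  then show ?thesis
    using ratio_s_Suc_le[of k] by linarith
qed

lemma level_width_le_budget: "level (Suc k) * width (Suc k) \<le> budget k / 2"
proof -
  have "(1 - \<eta> (Suc k)) * width (Suc k) \<le> width (Suc k)"
    using eta_pos[of "Suc k"] width_pos[of "Suc k"] by (simp add: algebra_simps)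
  then have "level (Suc k) * width (Suc k) \<le> width (Suc k) / \<phi> (width (Suc k))"
    using phi_pos[OF width_in, of "Suc k"] by (simp add: level_def divide_right_mono)
  also have "\<dots> \<le> s (Suc k) / \<phi> (s (Suc k))"
    using ratio_mono[OF width_in s_in width_le_s] .
  also have "\<dots> \<le> budget k / 2"
    by (rule ratio_s_Suc_le_budget)
  finally show ?thesis .
qed

lemma budget_Suc_le: "budget (Suc k) \<le> budget k / 2"
proof -
  have "budget (Suc k) \<le> b (Suc k) / \<phi> (b (Suc k)) / 2"
    using eta_le_one[of "Suc k"] eta_pos[of "Suc k"] b_pos[of "Suc k"] phi_pos[OF b_in, of "Suc k"]
    unfolding budget_def by (intro divide_right_mono mult_left_le_one_le) auto
  also have "\<dots> \<le> s (Suc k) / \<phi> (s (Suc k)) / 2"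
    using ratio_mono[OF b_in[of "Suc k"] s_in[of "Suc k"] b_le[of "Suc k"]] by simp
  also have "\<dots> \<le> budget k / 2"
  proof -
    have "X / 2 \<le> B / 2" if "X \<le> B / 2" "0 \<le> B" for X B :: real
      using that by linarith
    then show ?thesis
      using ratio_s_Suc_le_budget[of k] budget_nonneg[of k] by blast
  qed
  finally show ?thesis .
qed

lemma budget_add_le: "budget (k + m) \<le> budget k * (1 / 2) ^ m"
proof (induction m)
  case (Suc m)
  have "budget (k + Suc m) \<le> budget (k + m) / 2"
    using budget_Suc_le[of "k + m"] by simp
  also have "\<dots> \<le> budget k * (1 / 2) ^ m / 2"
    using Suc by simp
  finally show ?case by simp
qed simp

lemma integral_below_le_budget:
  "(\<integral>\<^sup>+x\<in>{0<..s (Suc k)}. ennreal (block_step s level x) \<partial>lborel) \<le> ennreal (budget k)"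
proof -
  have "(\<integral>\<^sup>+x\<in>{0<..s (Suc k)}. ennreal (block_step s level x) \<partial>lborel)
      = (\<Sum>i. ennreal (level (Suc (i + k)) * width (Suc (i + k))))"
    using set_nn_integral_block_step_tail[where c = level and j = "Suc k", OF decreasing level_nonneg]
    by (simp add: width_def)
  also have "\<dots> \<le> (\<Sum>i. ennreal (budget k * (1 / 2) ^ Suc i))"
  proof (intro suminf_le ennreal_leI)
    fix i
    have "level (Suc (i + k)) * width (Suc (i + k)) \<le> budget (k + i) / 2"
      using level_width_le_budget[of "i + k"] by (simp add: add.commute)
    also have "\<dots> \<le> budget k * (1 / 2) ^ Suc i"
      using budget_add_le[of k i] by simp
    finally show "level (Suc (i + k)) * width (Suc (i + k)) \<le> budget k * (1 / 2) ^ Suc i" .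
  qed simp_all
  also have "\<dots> = ennreal (budget k)"
    using budget_nonneg sums_mult[OF power_half_series, of "budget k"] by (subst suminf_ennreal_eq) auto
  finally show ?thesis .
qed

lemma block_bound_right:
  assumes "t \<in> \<Omega>" "b j \<le> t" "s (Suc j) < t" "t \<le> s j"
  shows "(\<integral>\<^sup>+x\<in>{0<..s (Suc j)}. ennreal (block_step s level x) \<partial>lborel) + ennreal (level j * (t - s (Suc j)))
    \<le> ennreal (t / \<phi> t)"
proof (rule ennreal_add_le_of_le)
  let ?R = "t / \<phi> t"
  show "(\<integral>\<^sup>+x\<in>{0<..s (Suc j)}. ennreal (block_step s level x) \<partial>lborel) \<le> ennreal (budget j)"
    by (rule integral_below_le_budget)
  show "0 \<le> budget j" "0 \<le> level j * (t - s (Suc j))"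
    using budget_nonneg level_nonneg[of j] assms(3) by simp_all
  have "level j * (t - s (Suc j)) \<le> level j * min t (width j)"
    using level_nonneg[of j] assms(3,4) s_pos[of "Suc j"] by (intro mult_left_mono) (auto simp: width_def)
  also have "\<dots> \<le> (1 - \<eta> j) * ?R"
    by (rule level_mult_min_le[OF assms(1)])
  finally have "level j * (t - s (Suc j)) \<le> (1 - \<eta> j) * ?R" .
  moreover have "budget j \<le> \<eta> j * ?R / 2"
    by (rule budget_le_ratio[OF assms(1,2)])
  moreover have "0 \<le> \<eta> j * ?R"
    using eta_pos[of j] phi_pos[OF assms(1)] pos[OF assms(1)] by simp
  moreover have "B + L \<le> R" if "L \<le> (1 - e) * R" "B \<le> e * R / 2" "0 \<le> e * R" for B L e R :: real
    using that by (simp add: left_diff_distrib)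
  ultimately show "budget j + level j * (t - s (Suc j)) \<le> ?R"
    by blast
qed

text \<open>Left of \<open>b j\<close> the value \<open>\<phi> t\<close> is so small compared with \<open>\<phi> (s j / 2)\<close> that block \<open>j\<close>
  contributes little; the blocks from \<open>j + 1\<close> on are then controlled by the next budget.\<close>
lemma block_bound_left:
  assumes "t \<in> \<Omega>" "t < b j" "s (Suc j) < t"
  shows "(\<integral>\<^sup>+x\<in>{0<..s (Suc j)}. ennreal (block_step s level x) \<partial>lborel) + ennreal (level j * (t - s (Suc j)))
    \<le> ennreal (t / \<phi> t)"
proof (rule ennreal_add_le_of_le)
  let ?R = "t / \<phi> t" and ?e = "\<eta> (Suc j)"
  have R: "0 \<le> ?R" "0 < t" "0 < \<phi> t"
    using phi_pos[OF assms(1)] pos[OF assms(1)] by simp_all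
  have "(\<integral>\<^sup>+x\<in>{0<..s (Suc j)}. ennreal (block_step s level x) \<partial>lborel)
      = (\<integral>\<^sup>+x\<in>{0<..s (Suc (Suc j))}. ennreal (block_step s level x) \<partial>lborel)
        + ennreal (level (Suc j) * width (Suc j))"
    using set_nn_integral_block_step_split[where c = level and j = "Suc j" and t = "s (Suc j)",
      OF decreasing level_nonneg] decreasing_to_zero_antimono[OF decreasing, of "Suc j" "Suc (Suc j)"]
    by (simp add: width_def)
  also have "\<dots> \<le> ennreal (?e * ?R / 2 + (1 - ?e) * ?R)"
  proof (rule ennreal_add_le_of_le)
    show "(\<integral>\<^sup>+x\<in>{0<..s (Suc (Suc j))}. ennreal (block_step s level x) \<partial>lborel) \<le> ennreal (?e * ?R / 2)"
      using integral_below_le_budget[of "Suc j"] budget_le_ratio[OF assms(1), of "Suc j"]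
        b_le[of "Suc j"] assms(3) by (meson ennreal_leI less_imp_le order_trans)
    show "?e * ?R / 2 + level (Suc j) * width (Suc j) \<le> ?e * ?R / 2 + (1 - ?e) * ?R"
      using level_mult_min_le[OF assms(1), of "Suc j"] width_le_s[of "Suc j"] assms(3) by (simp add: min_def)
  qed (use eta_pos[of "Suc j"] R phi_pos[OF assms(1)] level_nonneg[of "Suc j"] width_pos[of "Suc j"]
      in simp_all)
  finally show "(\<integral>\<^sup>+x\<in>{0<..s (Suc j)}. ennreal (block_step s level x) \<partial>lborel)
      \<le> ennreal (?e * ?R / 2 + (1 - ?e) * ?R)" .
  show "0 \<le> ?e * ?R / 2 + (1 - ?e) * ?R"
    using eta_pos[of "Suc j"] eta_le_one[of "Suc j"] R
    by (intro add_nonneg_nonneg mult_nonneg_nonneg divide_nonneg_nonneg) simp_all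
  show "0 \<le> level j * (t - s (Suc j))"
    using level_nonneg[of j] assms(3) by simp
  have "\<phi> t \<le> ?e * \<phi> (s j / 2) / 2"
    using phi_mono[OF assms(1) b_in[of j] less_imp_le[OF assms(2)]] phi_b_le[of j] by linarith
  then have "t / \<phi> (s j / 2) \<le> ?e * ?R / 2"
    using phi_pos[OF assms(1)] phi_pos[OF half_s_in] R eta_pos
    by (simp add: field_simps mult_left_mono)
  moreover have "level j * (t - s (Suc j)) \<le> t / \<phi> (s j / 2)"
    using mult_mono[OF level_le_inverse_phi_half, of "t - s (Suc j)" t j] phi_pos[OF half_s_in, of j]
      s_pos[of "Suc j"] assms(3) by simp
  moreover have "e * R / 2 + (1 - e) * R + L \<le> R" if "X \<le> e * R / 2" "L \<le> X" for X L e R :: real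
    using that left_diff_distrib[of 1 e R] by linarith
  ultimately show "?e * ?R / 2 + (1 - ?e) * ?R + level j * (t - s (Suc j)) \<le> ?R"
    by blast
qed

lemma block_bound:
  assumes "s (Suc j) < t" "t \<le> s j"
  shows "(\<integral>\<^sup>+x\<in>{0<..s (Suc j)}. ennreal (block_step s level x) \<partial>lborel) + ennreal (level j * (t - s (Suc j)))
    \<le> ennreal (t / \<phi> t)"
proof -
  have "t \<in> \<Omega>"
    using downward_closed[OF s_in _ assms(2)] s_pos[of "Suc j"] assms(1) by auto
  then show ?thesis
    using block_bound_right block_bound_left assms by (cases "b j \<le> t") (auto simp: not_le)
qed

lemma eventually_level_ge:
  assumes "z < 1"
  shows "eventually (\<lambda>k. z \<le> level k * \<phi> (s k - s (Suc k))) sequentially"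
proof -
  have "eventually (\<lambda>k. \<eta> k < 1 - z) sequentially"
    using order_tendstoD(2)[OF eta_tendsto_zero] assms by simp
  then show ?thesis
  proof eventually_elim
    case (elim k)
    have "level k * \<phi> (s k - s (Suc k)) = 1 - \<eta> k"
      using phi_pos[OF width_in, of k] by (simp add: level_def width_def)
    then show ?case using elim by simp
  qed
qed

lemma lattice_isometric_embedding: "lattice_isometric_embedding \<Omega> \<phi> (block_embedding s level)"
  using decreasing s_in level_nonneg level_incseq eventually_level_ge
    integral_bound_of_block_bounds[OF decreasing s_in level_nonneg block_bound]
  by (intro lattice_isometric_embedding_block_embedding) auto

end

context quasi_concave_initial_interval
begin

lemma exists_below_with_small_phi:
  assumes "\<And>e. 0 < e \<Longrightarrow> \<exists>t\<in>\<Omega>. \<phi> t < e" "x \<in> \<Omega>" "0 < e"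
  shows "\<exists>\<beta>. 0 < \<beta> \<and> \<beta> \<le> x \<and> \<phi> \<beta> \<le> e"
proof -
  obtain t where t: "t \<in> \<Omega>" "\<phi> t < e" using assms(1,3) by blast
  have "\<phi> (min t x) \<le> \<phi> t"
    using phi_mono[of "min t x" t] downward_closed[OF t(1), of "min t x"] pos[OF t(1)] pos[OF assms(2)] t(1)
    by simp
  then show ?thesis
    using t pos[OF t(1)] pos[OF assms(2)] by (intro exI[of _ "min t x"]) auto
qed

lemma exists_below_with_small_ratio:
  assumes "((\<lambda>t. t / \<phi> t) \<longlongrightarrow> 0) (at_right 0)" "0 < x" "0 < e"
  shows "\<exists>\<sigma>. 0 < \<sigma> \<and> \<sigma> \<le> x \<and> \<sigma> / \<phi> \<sigma> \<le> e"
proof -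
  obtain d where d: "0 < d" "\<And>y. 0 < y \<Longrightarrow> y < d \<Longrightarrow> y / \<phi> y < e"
    using order_tendstoD(2)[OF assms(1,3)] unfolding eventually_at_right_field by auto
  show ?thesis
    using d(2)[of "min x (d / 2)"] d(1) assms(2) by (intro exI[of _ "min x (d / 2)"]) (auto simp: min_def)
qed

lemma exists_vanishing_blocks:
  assumes phi_small: "\<And>e. 0 < e \<Longrightarrow> \<exists>t\<in>\<Omega>. \<phi> t < e"
    and ratio_tendsto_zero: "((\<lambda>t. t / \<phi> t) \<longlongrightarrow> 0) (at_right 0)"
    and eta: "\<And>k. 0 < \<eta> k" "\<And>k. \<eta> k \<le> 1" "\<And>k. \<eta> (Suc k) \<le> \<eta> k" "\<eta> \<longlonglongrightarrow> 0"
  shows "\<exists>s b. vanishing_blocks \<Omega> \<phi> \<eta> s b"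
proof -
  define P where "P k sb \<longleftrightarrow> fst sb \<in> \<Omega> \<and> 0 < snd sb \<and> snd sb \<le> fst sb
      \<and> \<phi> (snd sb) \<le> \<eta> (Suc k) * \<phi> (fst sb / 2) / 2" for k and sb :: "real \<times> real"
  define Q where "Q k sb sb' \<longleftrightarrow> 0 < fst sb' \<and> fst sb' \<le> snd sb / 2
      \<and> fst sb' / \<phi> (fst sb') \<le> \<eta> k * (snd sb / \<phi> (snd sb)) / 4" for k and sb sb' :: "real \<times> real"
  have choose_b: "\<exists>b. P k (s, b)" if s: "s \<in> \<Omega>" for k s
  proof -
    have "0 < \<eta> (Suc k) * \<phi> (s / 2) / 2"
      using eta(1) phi_pos downward_closed[OF s] pos[OF s] by simp
    then obtain b where "0 < b" "b \<le> s" "\<phi> b \<le> \<eta> (Suc k) * \<phi> (s / 2) / 2"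
      using exists_below_with_small_phi[OF phi_small s] by blast
    then show ?thesis
      using s by (intro exI[of _ b]) (simp add: P_def)
  qed
  have "\<exists>f. \<forall>k. P k (f k) \<and> Q k (f k) (f (Suc k))"
  proof (rule dependent_nat_choice)
    show "\<exists>x. P 0 x" using choose_b nonempty by fast
  next
    fix sb k assume P: "P k sb"
    then have "snd sb \<in> \<Omega>" using downward_closed[of "fst sb" "snd sb"] by (simp add: P_def)
    then have "0 < \<eta> k * (snd sb / \<phi> (snd sb)) / 4"
      using eta(1) phi_pos P by (simp add: P_def)
    then obtain s' where s': "0 < s'" "s' \<le> snd sb / 2" "s' / \<phi> s' \<le> \<eta> k * (snd sb / \<phi> (snd sb)) / 4"
      using exists_below_with_small_ratio[OF ratio_tendsto_zero, of "snd sb / 2"] P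
      by (auto simp: P_def)
    then have "s' \<in> \<Omega>" using downward_closed[OF \<open>snd sb \<in> \<Omega>\<close>] P by (simp add: P_def)
    then obtain b' where "P (Suc k) (s', b')" using choose_b by blast
    then show "\<exists>y. P (Suc k) y \<and> Q k sb y"
      using s' by (auto simp: Q_def)
  qed
  then obtain f where "\<And>k. P k (f k)" "\<And>k. Q k (f k) (f (Suc k))" by blast
  then have "vanishing_blocks_axioms \<Omega> \<phi> \<eta> (fst \<circ> f) (snd \<circ> f)"
    using eta by unfold_locales (simp_all add: P_def Q_def)
  then show ?thesis
    by (intro exI vanishing_blocks.intro quasi_concave_initial_interval_axioms)
qed

lemma exists_lattice_isometric_embedding_if_phi_vanishes:
  assumes "\<And>e. 0 < e \<Longrightarrow> \<exists>t\<in>\<Omega>. \<phi> t < e" "((\<lambda>t. t / \<phi> t) \<longlongrightarrow> 0) (at_right 0)"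
  shows "\<exists>T. lattice_isometric_embedding \<Omega> \<phi> T"
proof -
  define \<eta> :: "nat \<Rightarrow> real" where "\<eta> k = (1 / 2) ^ Suc k" for k
  have "\<eta> \<longlonglongrightarrow> 0"
    unfolding \<eta>_def by (intro LIMSEQ_power_zero[THEN LIMSEQ_Suc]) simp
  moreover have "0 < \<eta> k" for k
    by (simp add: \<eta>_def)
  moreover have "\<eta> k \<le> 1" for k
    unfolding \<eta>_def by (rule power_le_one) simp_all
  moreover have "\<eta> (Suc k) \<le> \<eta> k" for k
    unfolding \<eta>_def by (rule power_decreasing) simp_all
  ultimately obtain s b where "vanishing_blocks \<Omega> \<phi> \<eta> s b"
    using exists_vanishing_blocks[OF assms] by blast
  then show ?thesis
    using vanishing_blocks.lattice_isometric_embedding by blast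
qed

end

theorem corollary3p9:
  fixes \<Omega> :: "real set" and \<phi> :: "real \<Rightarrow> real"
  assumes "\<Omega> = {0<..<1} \<or> \<Omega> = {0<..}"
    and "quasi_concave_on \<Omega> \<phi>"
    and "((\<lambda>t. t / \<phi> t) \<longlongrightarrow> 0) (at_right 0)"
  shows "\<exists>T. lattice_isometric_embedding \<Omega> \<phi> T"
proof -
  interpret quasi_concave_initial_interval \<Omega> \<phi>
  proof
    have "1 / 2 \<in> \<Omega>" using assms(1) by auto
    then show "\<Omega> \<noteq> {}" by blast
  qed (use assms(1,2) in auto)
  show ?thesis
  proof (cases "\<exists>a>0. \<forall>t\<in>\<Omega>. a \<le> \<phi> t")
    case True
    then show ?thesis using exists_lattice_isometric_embedding_if_bounded_below by blast
  next
    case False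
    then have "\<exists>t\<in>\<Omega>. \<phi> t < e" if "0 < e" for e
      using that by (auto simp: not_le)
    then show ?thesis using exists_lattice_isometric_embedding_if_phi_vanishes assms(3) by blast
  qed
qed

end
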